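(* Let $h\in(0,1]$ and constants $c,c_2$ with $h^2c>c_2>0$, and let $C=\frac{h^2c-c_2}{2(1+h^2c)(1+c_2)}$. Let $m\ge1$ and $\lambda>0$ with $0<\frac{\lambda}{m}<C$. Let $X_1,\dots,X_m$ be independent Bernoulli ($\{0,1\}$-valued) random variables, let $\epsilon_1,\dots,\epsilon_m$ be i.i.d. Rademacher random variables independent of $(X_i)$, and set $\epsilon_i''=\epsilon_i\frac{c+c_2}{2}-\frac{c-c_2}{2}$. Then for any random variables $Y_1,\dots,Y_m$ taking values in $[0,1]$ (defined on the same probability space, with arbitrary dependence on $(X_i)$ and $(\epsilon_i)$), $$\mathbb E\Big[\exp\Big(\frac{\lambda}{m}\sum_{i=1}^m X_i\big[(\epsilon_i+\epsilon_i'')-\epsilon_i''(1-h^2)Y_i\big]\Big)\Big]\le1.$$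
   Context: A Rademacher random variable takes values $+1$ and $-1$ each with probability $1/2$. *)

theory Defs
  imports "HOL-Probability.Probability"
begin

definition bernoulli_rv :: "'a measure \<Rightarrow> ('a \<Rightarrow> real) \<Rightarrow> bool" where
  "bernoulli_rv M Z \<longleftrightarrow> Z \<in> borel_measurable M \<and> (\<forall>x\<in>space M. Z x \<in> {0, 1})"

definition rademacher_rv :: "'a measure \<Rightarrow> ('a \<Rightarrow> real) \<Rightarrow> bool" where
  "rademacher_rv M Z \<longleftrightarrow> Z \<in> borel_measurable M \<and> (\<forall>x\<in>space M. Z x \<in> {-1, 1})
     \<and> measure M {x \<in> space M. Z x = 1} = 1/2"

end

theory Submission
  imports Defs
begin

text \<open>Write \<open>t = \<lambda>/m\<close>, \<open>a = 1 + c\<^sub>2\<close> and \<open>b = 1 + h\<^sup>2c\<close>. Where \<open>X\<^sub>i = 1\<close>, the \<open>i\<close>-th summand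
  is at most \<open>a\<close> if \<open>\<epsilon>\<^sub>i = 1\<close> and at most \<open>-b\<close> if \<open>\<epsilon>\<^sub>i = -1\<close>, whatever \<open>Y\<^sub>i\<close> is. Hence the exponential
  is dominated by \<open>\<Prod>\<^sub>i (1 + X\<^sub>i W\<^sub>i)\<close> with \<open>W\<^sub>i = exp (t a) - 1\<close> or \<open>exp (-t b) - 1\<close>, which no longer
  involves \<open>Y\<close>. By independence its expectation is \<open>\<Prod>\<^sub>i (1 + E X\<^sub>i \<cdot> E W\<^sub>i)\<close>, and
  \<open>E W\<^sub>i = (exp (t a) + exp (-t b))/2 - 1 \<le> 0\<close>; this is where \<open>t < C = (b - a)/(2ab)\<close> enters.\<close>

lemma (in prob_space) has_bochner_integral_const_prob: "has_bochner_integral M (\<lambda>_. c) (c::real)"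
  by (simp add: has_bochner_integral_iff prob_space)

lemma (in prob_space) has_bochner_integral_bernoulli:
  assumes "bernoulli_rv M X"
  shows "has_bochner_integral M X (prob {\<omega> \<in> space M. X \<omega> = 1})"
proof -
  let ?S = "{\<omega> \<in> space M. X \<omega> = 1}"
  have [measurable]: "X \<in> borel_measurable M" and X01: "\<And>\<omega>. \<omega> \<in> space M \<Longrightarrow> X \<omega> \<in> {0, 1}"
    using assms by (auto simp: bernoulli_rv_def)
  have "has_bochner_integral M (indicator ?S) (prob ?S)"
    by (intro has_bochner_integral_real_indicator) (auto simp: less_top[symmetric])
  moreover have "\<And>\<omega>. \<omega> \<in> space M \<Longrightarrow> indicator ?S \<omega> = X \<omega>"
    using X01 by (auto simp: indicator_def)
  ultimately show ?thesis by (simp cong: has_bochner_integral_cong)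
qed

lemma (in prob_space) has_bochner_integral_rademacher:
  assumes "rademacher_rv M e"
  shows "has_bochner_integral M (\<lambda>\<omega>. f (e \<omega>)) ((f 1 + f (-1)) / 2 :: real)"
proof -
  let ?S = "{\<omega> \<in> space M. e \<omega> = 1}"
  have [measurable]: "e \<in> borel_measurable M" and e01: "\<And>\<omega>. \<omega> \<in> space M \<Longrightarrow> e \<omega> \<in> {-1, 1}"
    and half: "prob ?S = 1/2"
    using assms by (auto simp: rademacher_rv_def)
  have "has_bochner_integral M (\<lambda>\<omega>. f (-1) + indicator ?S \<omega> * (f 1 - f (-1)))
          (f (-1) + prob ?S * (f 1 - f (-1)))"
    by (intro has_bochner_integral_add has_bochner_integral_const_prob has_bochner_integral_mult_left
          has_bochner_integral_real_indicator) (auto simp: less_top[symmetric])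
  moreover have "\<And>\<omega>. \<omega> \<in> space M \<Longrightarrow> f (-1) + indicator ?S \<omega> * (f 1 - f (-1)) = f (e \<omega>)"
    using e01 by (fastforce simp: indicator_def)
  ultimately show ?thesis by (simp add: half field_simps cong: has_bochner_integral_cong)
qed

lemma (in prob_space) has_bochner_integral_prod_one_add_mult:
  fixes X W :: "'i \<Rightarrow> 'a \<Rightarrow> real"
  assumes I: "finite I"
    and indep: "indep_vars (\<lambda>_. borel) (case_sum X W) (I <+> I)"
    and X: "\<And>i. i \<in> I \<Longrightarrow> has_bochner_integral M (X i) (p i)"
    and W: "\<And>i. i \<in> I \<Longrightarrow> has_bochner_integral M (W i) (w i)"
  shows "has_bochner_integral M (\<lambda>\<omega>. \<Prod>i\<in>I. 1 + X i \<omega> * W i \<omega>) (\<Prod>i\<in>I. 1 + p i * w i)"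
proof -
  have subset_term: "has_bochner_integral M (\<lambda>\<omega>. \<Prod>i\<in>B. X i \<omega> * W i \<omega>) (\<Prod>i\<in>B. p i * w i)"
    if B: "B \<subseteq> I" for B
  proof -
    have finB: "finite B" using B I by (rule finite_subset)
    then have fin: "finite (B <+> B)" by simp
    have indB: "indep_vars (\<lambda>_. borel) (case_sum X W) (B <+> B)"
      using indep by (rule indep_vars_subset) (use B in auto)
    have int: "integrable M (case_sum X W k)" and int_eq: "expectation (case_sum X W k) = case_sum p w k"
      if "k \<in> B <+> B" for k
      using that B X W by (auto simp: has_bochner_integral_iff)
    have "\<And>\<omega>. (\<Prod>k\<in>B <+> B. case_sum X W k \<omega>) = (\<Prod>i\<in>B. X i \<omega> * W i \<omega>)"
         "(\<Prod>k\<in>B <+> B. case_sum p w k) = (\<Prod>i\<in>B. p i * w i)"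
      by (simp_all only: prod.Plus[OF finB finB] prod.distrib comp_def sum.case)
    moreover have "(\<Prod>k\<in>B <+> B. expectation (case_sum X W k)) = (\<Prod>k\<in>B <+> B. case_sum p w k)"
      using int_eq by (rule prod.cong[OF refl])
    ultimately show ?thesis
      using indep_vars_integrable[OF fin indB int] indep_vars_lebesgue_integral[OF fin indB int]
      by (simp add: has_bochner_integral_iff)
  qed
  have "has_bochner_integral M (\<lambda>\<omega>. \<Sum>B\<in>Pow I. \<Prod>i\<in>B. X i \<omega> * W i \<omega>) (\<Sum>B\<in>Pow I. \<Prod>i\<in>B. p i * w i)"
    by (intro has_bochner_integral_sum subset_term) simp
  moreover have "(\<Prod>i\<in>I. 1 + a i) = (\<Sum>B\<in>Pow I. \<Prod>i\<in>B. a i)" for a :: "'i \<Rightarrow> real"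
    using prod_add[OF I, of a "\<lambda>_. 1"] by (simp add: add.commute)
  ultimately show ?thesis by simp
qed

lemma (in prob_space) expectation_prod_one_add_bernoulli_mult_le_1:
  fixes X W :: "'i \<Rightarrow> 'a \<Rightarrow> real"
  assumes "finite I" "indep_vars (\<lambda>_. borel) (case_sum X W) (I <+> I)"
    and "\<And>i. i \<in> I \<Longrightarrow> bernoulli_rv M (X i)"
    and "\<And>i. i \<in> I \<Longrightarrow> has_bochner_integral M (W i) w" "-1 \<le> w" "w \<le> 0"
  shows "integrable M (\<lambda>\<omega>. \<Prod>i\<in>I. 1 + X i \<omega> * W i \<omega>)"
    and "expectation (\<lambda>\<omega>. \<Prod>i\<in>I. 1 + X i \<omega> * W i \<omega>) \<le> 1"
proof -
  define p where "p i = prob {\<omega> \<in> space M. X i \<omega> = 1}" for i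
  have "has_bochner_integral M (\<lambda>\<omega>. \<Prod>i\<in>I. 1 + X i \<omega> * W i \<omega>) (\<Prod>i\<in>I. 1 + p i * w)"
    using assms(1,2) unfolding p_def
    by (rule has_bochner_integral_prod_one_add_mult) (use assms(3,4) has_bochner_integral_bernoulli in auto)
  moreover have "(\<Prod>i\<in>I. 1 + p i * w) \<le> 1"
  proof (rule prod_le_1)
    fix i
    have "0 \<le> p i" "p i \<le> 1" by (simp_all add: p_def)
    then show "0 \<le> 1 + p i * w \<and> 1 + p i * w \<le> 1"
      using mult_le_one[of "p i" "- w"] mult_nonneg_nonpos[of "p i" w] assms(5,6) by auto
  qed
  ultimately show "integrable M (\<lambda>\<omega>. \<Prod>i\<in>I. 1 + X i \<omega> * W i \<omega>)"
    and "expectation (\<lambda>\<omega>. \<Prod>i\<in>I. 1 + X i \<omega> * W i \<omega>) \<le> 1"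
    by (auto simp: has_bochner_integral_iff)
qed

lemma exp_add_exp_neg_le_2:
  fixes s u :: real
  assumes "0 < s" "0 < u" "2 * s * u \<le> u - s"
  shows "exp s + exp (- u) \<le> 2"
proof -
  have su: "s * (1 + u) \<le> u - s * u" using assms by (simp add: algebra_simps)
  moreover have "0 \<le> s * u" using assms by simp
  ultimately have s_le: "s * (1 + u) \<le> u" by linarith
  then have "s < 1" using assms by (smt (verit) mult_less_cancel_right2)
  then have "exp s \<le> 1 + s + s\<^sup>2" using assms exp_bound[of s] by simp
  moreover have "exp (- u) \<le> 1 / (1 + u)"
    using exp_ge_add_one_self[of u] assms by (simp add: exp_minus divide_simps)
  moreover have "(s + s\<^sup>2) * (1 + u) \<le> u"
  proof -
    have "s * (s * (1 + u)) \<le> s * u" using assms s_le mult_left_mono[of "s * (1 + u)" u s] by simp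
    with su show ?thesis by (simp add: algebra_simps power2_eq_square)
  qed
  then have "s + s\<^sup>2 \<le> 1 - 1 / (1 + u)" using assms by (simp add: field_simps)
  ultimately show ?thesis by linarith
qed

corollary exp_mult_add_exp_neg_mult_le_2:
  fixes a b t :: real
  assumes "0 < a" "a < b" "0 < t" "t \<le> (b - a) / (2 * a * b)"
  shows "exp (t * a) + exp (- (t * b)) \<le> 2"
proof (rule exp_add_exp_neg_le_2)
  have "t * (2 * a * b) \<le> b - a" using assms by (simp add: pos_le_divide_eq)
  from mult_left_mono[OF this, of t] show "2 * (t * a) * (t * b) \<le> t * b - t * a"
    using assms by (simp add: algebra_simps)
qed (use assms in auto)

lemma exp_summand_le:
  fixes x e y t c c\<^sub>2 h :: real
  assumes "x \<in> {0, 1}" "e \<in> {-1, 1}" "y \<in> {0..1}" "0 \<le> t" "0 \<le> c" "0 \<le> c\<^sub>2" "h\<^sup>2 \<le> 1"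
  shows "exp (t * (x * ((e + (e * (c + c\<^sub>2) / 2 - (c - c\<^sub>2) / 2))
                    - (e * (c + c\<^sub>2) / 2 - (c - c\<^sub>2) / 2) * (1 - h\<^sup>2) * y)))
         \<le> 1 + x * (exp (if e = 1 then t * (1 + c\<^sub>2) else - (t * (1 + h\<^sup>2 * c))) - 1)"
proof -
  have "(e + (e * (c + c\<^sub>2) / 2 - (c - c\<^sub>2) / 2)) - (e * (c + c\<^sub>2) / 2 - (c - c\<^sub>2) / 2) * (1 - h\<^sup>2) * y
        \<le> (if e = 1 then 1 + c\<^sub>2 else - (1 + h\<^sup>2 * c))" (is "?T \<le> ?g")
  proof (cases "e = 1")
    case True
    have "0 \<le> c\<^sub>2 * (1 - h\<^sup>2) * y" using assms by simp
    then show ?thesis using True by (simp add: field_simps)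
  next
    case False
    then have "e = -1" using assms by simp
    moreover have "c * (1 - h\<^sup>2) * y \<le> c * (1 - h\<^sup>2)"
      using assms by (simp add: mult_left_le)
    ultimately show ?thesis by (simp add: field_simps)
  qed
  from mult_left_mono[OF this \<open>0 \<le> t\<close>]
  have "t * ?T \<le> (if e = 1 then t * (1 + c\<^sub>2) else - (t * (1 + h\<^sup>2 * c)))"
    by (simp only: if_distrib[of "(*) t"] mult_minus_right)
  then show ?thesis using assms by auto
qed

lemma exp_mult_sum_le_prod:
  fixes x e y :: "'i \<Rightarrow> real" and t c c\<^sub>2 h :: real
  assumes "finite I"
    and "\<And>i. i \<in> I \<Longrightarrow> x i \<in> {0, 1}" "\<And>i. i \<in> I \<Longrightarrow> e i \<in> {-1, 1}" "\<And>i. i \<in> I \<Longrightarrow> y i \<in> {0..1}"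
    and "0 \<le> t" "0 \<le> c" "0 \<le> c\<^sub>2" "h\<^sup>2 \<le> 1"
  shows "exp (t * (\<Sum>i\<in>I. x i * ((e i + (e i * (c + c\<^sub>2) / 2 - (c - c\<^sub>2) / 2))
                    - (e i * (c + c\<^sub>2) / 2 - (c - c\<^sub>2) / 2) * (1 - h\<^sup>2) * y i)))
         \<le> (\<Prod>i\<in>I. 1 + x i * (exp (if e i = 1 then t * (1 + c\<^sub>2) else - (t * (1 + h\<^sup>2 * c))) - 1))"
  unfolding sum_distrib_left exp_sum[OF assms(1)]
  by (intro prod_mono conjI exp_ge_zero exp_summand_le) (use assms in auto)

lemma (in prob_space) indep_vars_case_sum_comp_right:
  assumes "indep_vars (\<lambda>_. borel) (case_sum X Z) (I <+> I)" and [measurable]: "f \<in> borel_measurable borel"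
  shows "indep_vars (\<lambda>_. borel) (case_sum X (\<lambda>i \<omega>. f (Z i \<omega>))) (I <+> I)"
proof -
  have "indep_vars (\<lambda>_. borel) (\<lambda>k \<omega>. case_sum (\<lambda>_ x. x) (\<lambda>_. f) k (case_sum X Z k \<omega>)) (I <+> I)"
    using assms(1) by (rule indep_vars_compose2) (auto split: sum.split)
  moreover have "(\<lambda>k \<omega>. case_sum (\<lambda>_ x. x) (\<lambda>_. f) k (case_sum X Z k \<omega>)) = case_sum X (\<lambda>i \<omega>. f (Z i \<omega>))"
    by (auto simp: fun_eq_iff split: sum.split)
  ultimately show ?thesis by simp
qed

theorem mainTheorem7:
  fixes M :: "'a measure"
    and h c c\<^sub>2 C lam :: real
    and m :: nat
    and X eps Y :: "nat \<Rightarrow> 'a \<Rightarrow> real"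
  assumes "prob_space M"
    and "0 < h" "h \<le> 1"
    and "h\<^sup>2 * c > c\<^sub>2" "c\<^sub>2 > 0"
    and "C = (h\<^sup>2 * c - c\<^sub>2) / (2 * (1 + h\<^sup>2 * c) * (1 + c\<^sub>2))"
    and "m \<ge> 1" "lam > 0" "lam / real m < C"
    and "\<And>i. i \<in> {1..m} \<Longrightarrow> bernoulli_rv M (X i)"
    and "\<And>i. i \<in> {1..m} \<Longrightarrow> rademacher_rv M (eps i)"
    and "prob_space.indep_vars M (\<lambda>_. borel)
           (\<lambda>k. case k of Inl i \<Rightarrow> X i | Inr i \<Rightarrow> eps i) ({1..m} <+> {1..m})"
    and "\<And>i. i \<in> {1..m} \<Longrightarrow> Y i \<in> borel_measurable M"
    and "\<And>i x. i \<in> {1..m} \<Longrightarrow> x \<in> space M \<Longrightarrow> Y i x \<in> {0..1}"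
  shows "prob_space.expectation M (\<lambda>x. exp (lam / real m * (\<Sum>i=1..m.
            X i x * ((eps i x + (eps i x * (c + c\<^sub>2) / 2 - (c - c\<^sub>2) / 2))
                     - (eps i x * (c + c\<^sub>2) / 2 - (c - c\<^sub>2) / 2) * (1 - h\<^sup>2) * Y i x)))) \<le> 1"
proof -
  interpret prob_space M by fact
  define t where "t = lam / real m"
  define f where "f e = exp (if e = 1 then t * (1 + c\<^sub>2) else - (t * (1 + h\<^sup>2 * c))) - 1" for e :: real
  have "0 < t" "0 < h\<^sup>2" "h\<^sup>2 \<le> 1" using assms(2,3,7,8) by (auto simp: t_def power_le_one)
  then have "0 < c" using assms(4,5) by (smt (verit) mult_nonneg_nonpos)
  have "t \<le> ((1 + h\<^sup>2 * c) - (1 + c\<^sub>2)) / (2 * (1 + c\<^sub>2) * (1 + h\<^sup>2 * c))"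
    using assms(6,9) by (simp add: t_def algebra_simps)
  from exp_mult_add_exp_neg_mult_le_2[OF _ _ \<open>0 < t\<close> this]
  have w: "-1 \<le> (f 1 + f (-1)) / 2" "(f 1 + f (-1)) / 2 \<le> 0"
    using assms(4,5) exp_gt_zero[of "t * (1 + c\<^sub>2)"] exp_gt_zero[of "- (t * (1 + h\<^sup>2 * c))"]
    by (auto simp: f_def)
  have "f \<in> borel_measurable borel" unfolding f_def by measurable
  with assms(12) have "indep_vars (\<lambda>_. borel) (case_sum X (\<lambda>i \<omega>. f (eps i \<omega>))) ({1..m} <+> {1..m})"
    by (rule indep_vars_case_sum_comp_right)
  note prod_le = expectation_prod_one_add_bernoulli_mult_le_1[OF finite_atLeastAtMost this assms(10)
      has_bochner_integral_rademacher[OF assms(11)] w]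
  have bound: "exp (lam / real m * (\<Sum>i=1..m.
            X i \<omega> * ((eps i \<omega> + (eps i \<omega> * (c + c\<^sub>2) / 2 - (c - c\<^sub>2) / 2))
                     - (eps i \<omega> * (c + c\<^sub>2) / 2 - (c - c\<^sub>2) / 2) * (1 - h\<^sup>2) * Y i \<omega>)))
        \<le> (\<Prod>i=1..m. 1 + X i \<omega> * f (eps i \<omega>))" if "\<omega> \<in> space M" for \<omega>
    unfolding t_def[symmetric] f_def
  proof (rule exp_mult_sum_le_prod)
    fix i assume "i \<in> {1..m}"
    then show "X i \<omega> \<in> {0, 1}" "eps i \<omega> \<in> {-1, 1}" "Y i \<omega> \<in> {0..1}"
      using assms(10,11,14) that by (auto simp: bernoulli_rv_def rademacher_rv_def)
  qed (use \<open>0 < t\<close> \<open>0 < c\<close> \<open>h\<^sup>2 \<le> 1\<close> assms(5) in auto)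
  show ?thesis
    using integral_mono'[OF prod_le(1) bound order_trans[OF exp_ge_zero bound]] prod_le(2) by linarith
qed

end
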